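(* For every $c\ge0$, the function $x\mapsto g(x;c)/\phi(x)$ is increasing on $(c,\infty)$.
   Context: Let $\phi$ denote the standard normal density. Let $\gamma_0$ be a probability density on $\mathbb{R}$ that is symmetric about $0$ and unimodal, and for $c\in\mathbb{R}$ set $g(x;c)=\int_{-\infty}^{\infty}\phi(x-\mu)\gamma_0(\mu-c)\,d\mu$. *)

theory Defs
  imports "HOL-Probability.Probability"
begin

definition g_mix :: "(real \<Rightarrow> real) \<Rightarrow> real \<Rightarrow> real \<Rightarrow> real" where
  "g_mix \<gamma>0 x c = (\<integral>\<mu>. std_normal_density (x - \<mu>) * \<gamma>0 (\<mu> - c) \<partial>lborel)"

end

theory Submission
  imports Defs
begin

text \<open>
  Dividing by \<open>\<phi>(x)\<close> and substituting \<open>\<mu> = c + t\<close> gives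
  \<open>g(x;c)/\<phi>(x) = exp (x c - c\<^sup>2/2) L(x - c)\<close>, where \<open>L\<close> is the Laplace transform of
  \<open>t \<mapsto> exp (-t\<^sup>2/2) \<gamma>\<^sub>0(t)\<close>. The first factor is nondecreasing in \<open>x\<close> because \<open>c \<ge> 0\<close>.
  By symmetry of \<open>\<gamma>\<^sub>0\<close>, \<open>L(a)\<close> is the integral of \<open>cosh (a t) exp (-t\<^sup>2/2) \<gamma>\<^sub>0(t)\<close>, which
  is strictly increasing in \<open>a \<ge> 0\<close> since \<open>\<gamma>\<^sub>0\<close> is not almost everywhere zero.
\<close>

definition gauss_laplace :: "(real \<Rightarrow> real) \<Rightarrow> real \<Rightarrow> real" where
  "gauss_laplace \<gamma> a = (\<integral>t. exp (a * t - t\<^sup>2 / 2) * \<gamma> t \<partial>lborel)"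

lemma exp_linear_minus_half_square_le: "exp (a * t - t\<^sup>2 / 2) \<le> exp (a\<^sup>2 / 2 :: real)"
proof -
  have "a * t - t\<^sup>2 / 2 \<le> a\<^sup>2 / 2"
    using sum_squares_ge_zero[of "a - t" 0] by (simp add: power2_eq_square algebra_simps)
  then show ?thesis by simp
qed

lemma integrable_gauss_laplace:
  fixes \<gamma> :: "real \<Rightarrow> real"
  assumes "integrable lborel \<gamma>"
  shows "integrable lborel (\<lambda>t. exp (a * t - t\<^sup>2 / 2) * \<gamma> t)"
proof (rule Bochner_Integration.integrable_bound[where f = "\<lambda>t. exp (a\<^sup>2 / 2) * \<gamma> t"])
  show "integrable lborel (\<lambda>t. exp (a\<^sup>2 / 2) * \<gamma> t)"
    using assms by simp
  have [measurable]: "\<gamma> \<in> borel_measurable lborel"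
    using assms by (rule borel_measurable_integrable)
  show "(\<lambda>t. exp (a * t - t\<^sup>2 / 2) * \<gamma> t) \<in> borel_measurable lborel"
    by measurable
  show "AE t in lborel. norm (exp (a * t - t\<^sup>2 / 2) * \<gamma> t) \<le> norm (exp (a\<^sup>2 / 2) * \<gamma> t)"
    using exp_linear_minus_half_square_le[of a] by (auto simp: abs_mult intro!: mult_right_mono)
qed

lemma std_normal_density_shift_div:
  "std_normal_density (x - \<mu>) / std_normal_density x = exp (x * \<mu> - \<mu>\<^sup>2 / 2)"
proof -
  have "std_normal_density (x - \<mu>) / std_normal_density x = exp (- ((x - \<mu>)\<^sup>2) / 2) / exp (- (x\<^sup>2) / 2)"
    by (simp add: std_normal_density_def)
  also have "\<dots> = exp (- ((x - \<mu>)\<^sup>2) / 2 - (- (x\<^sup>2) / 2))"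
    by (simp only: exp_diff)
  also have "\<dots> = exp (x * \<mu> - \<mu>\<^sup>2 / 2)"
    by (simp add: power2_eq_square field_simps)
  finally show ?thesis .
qed

lemma g_mix_div_std_normal_density:
  "g_mix \<gamma> x c / std_normal_density x = exp (x * c - c\<^sup>2 / 2) * gauss_laplace \<gamma> (x - c)"
proof -
  have "g_mix \<gamma> x c / std_normal_density x = (\<integral>\<mu>. exp (x * \<mu> - \<mu>\<^sup>2 / 2) * \<gamma> (\<mu> - c) \<partial>lborel)"
    unfolding g_mix_def std_normal_density_shift_div[symmetric] by simp
  also have "\<dots> = (\<integral>t. exp (x * (c + 1 * t) - (c + 1 * t)\<^sup>2 / 2) * \<gamma> (c + 1 * t - c) \<partial>lborel)"
    by (subst lborel_integral_real_affine[where c = 1 and t = c]) auto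
  also have "\<dots> = (\<integral>t. exp (x * c - c\<^sup>2 / 2) * (exp ((x - c) * t - t\<^sup>2 / 2) * \<gamma> t) \<partial>lborel)"
    by (rule Bochner_Integration.integral_cong[OF refl])
      (simp add: exp_add[symmetric] power2_eq_square field_simps)
  also have "\<dots> = exp (x * c - c\<^sup>2 / 2) * gauss_laplace \<gamma> (x - c)"
    by (simp add: gauss_laplace_def)
  finally show ?thesis .
qed

lemma gauss_laplace_nonneg:
  assumes "\<And>t. \<gamma> t \<ge> 0"
  shows "gauss_laplace \<gamma> a \<ge> 0"
  unfolding gauss_laplace_def using assms by (intro integral_nonneg_AE) auto

lemma gauss_laplace_minus:
  assumes "\<And>t. \<gamma> (- t) = \<gamma> t"
  shows "gauss_laplace \<gamma> (- a) = gauss_laplace \<gamma> a"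
proof -
  have "gauss_laplace \<gamma> a = (\<integral>t. exp (a * (0 + -1 * t) - (0 + -1 * t)\<^sup>2 / 2) * \<gamma> (0 + -1 * t) \<partial>lborel)"
    unfolding gauss_laplace_def by (subst lborel_integral_real_affine[where c = "-1" and t = 0]) auto
  also have "\<dots> = gauss_laplace \<gamma> (- a)"
    by (simp add: gauss_laplace_def assms)
  finally show ?thesis ..
qed

lemma cosh_gauss_split:
  "cosh (a * t) * exp (- t\<^sup>2 / 2) * y
    = (exp (a * t - t\<^sup>2 / 2) * y + exp ((- a) * t - t\<^sup>2 / 2) * y) / (2 :: real)"
proof -
  have "exp (a * t - t\<^sup>2 / 2) = exp (a * t) * exp (- t\<^sup>2 / 2)"
    and "exp ((- a) * t - t\<^sup>2 / 2) = exp (- (a * t)) * exp (- t\<^sup>2 / 2)"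
    by (simp_all add: exp_add[symmetric])
  then show ?thesis
    by (simp add: cosh_field_def field_simps)
qed

lemma integrable_cosh_gauss:
  fixes \<gamma> :: "real \<Rightarrow> real"
  assumes "integrable lborel \<gamma>"
  shows "integrable lborel (\<lambda>t. cosh (a * t) * exp (- t\<^sup>2 / 2) * \<gamma> t)"
  unfolding cosh_gauss_split
  using integrable_gauss_laplace[OF assms, of a] integrable_gauss_laplace[OF assms, of "- a"]
  by simp

lemma gauss_laplace_eq_cosh_integral:
  assumes "integrable lborel \<gamma>" "\<And>t. \<gamma> (- t) = \<gamma> t"
  shows "gauss_laplace \<gamma> a = (\<integral>t. cosh (a * t) * exp (- t\<^sup>2 / 2) * \<gamma> t \<partial>lborel)"
proof -
  have "(\<integral>t. cosh (a * t) * exp (- t\<^sup>2 / 2) * \<gamma> t \<partial>lborel)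
      = (gauss_laplace \<gamma> a + gauss_laplace \<gamma> (- a)) / 2"
    unfolding cosh_gauss_split
    using integrable_gauss_laplace[OF assms(1), of a] integrable_gauss_laplace[OF assms(1), of "- a"]
    by (simp add: gauss_laplace_def)
  then show ?thesis
    using gauss_laplace_minus[of \<gamma> a] assms(2) by simp
qed

lemma gauss_laplace_strict_mono:
  fixes \<gamma> :: "real \<Rightarrow> real"
  assumes nonneg: "\<And>t. \<gamma> t \<ge> 0"
    and integrable: "integrable lborel \<gamma>"
    and symmetric: "\<And>t. \<gamma> (- t) = \<gamma> t"
    and nonzero: "(\<integral>t. \<gamma> t \<partial>lborel) \<noteq> 0"
  shows "strict_mono_on {0..} (gauss_laplace \<gamma>)"
proof (rule strict_mono_onI)
  fix a b :: real
  assume "a \<in> {0..}" and "a < b"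
  define H where "H s t = cosh (s * t) * exp (- t\<^sup>2 / 2) * \<gamma> t" for s t
  have H_integrable: "integrable lborel (H s)" for s
    unfolding H_def using integrable by (rule integrable_cosh_gauss)
  have H_le: "H a t \<le> H b t" for t
  proof -
    have "\<bar>a * t\<bar> \<le> \<bar>b * t\<bar>"
      using \<open>a \<in> {0..}\<close> \<open>a < b\<close> by (simp add: abs_mult mult_right_mono)
    then have "cosh (a * t) \<le> cosh (b * t)"
      by (metis cosh_real_abs cosh_real_nonneg_le_iff abs_ge_zero)
    then show ?thesis
      unfolding H_def using nonneg[of t] by (intro mult_right_mono) auto
  qed
  have H_less: "H a t < H b t" if "t \<noteq> 0" "\<gamma> t \<noteq> 0" for t
  proof -
    have "\<bar>a * t\<bar> < \<bar>b * t\<bar>"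
      using \<open>a \<in> {0..}\<close> \<open>a < b\<close> that by (simp add: abs_mult mult_strict_right_mono)
    then have "cosh (a * t) < cosh (b * t)"
      by (metis cosh_real_abs cosh_real_nonneg_less_iff abs_ge_zero)
    then show ?thesis
      unfolding H_def using nonneg[of t] that by (intro mult_strict_right_mono) auto
  qed
  have L_eq: "gauss_laplace \<gamma> s = integral\<^sup>L lborel (H s)" for s
    unfolding H_def using integrable symmetric by (rule gauss_laplace_eq_cosh_integral)
  have "gauss_laplace \<gamma> a \<le> gauss_laplace \<gamma> b"
    unfolding L_eq using H_le H_integrable by (intro integral_mono) auto
  moreover have "gauss_laplace \<gamma> a \<noteq> gauss_laplace \<gamma> b"
  proof
    assume "gauss_laplace \<gamma> a = gauss_laplace \<gamma> b"
    then have "(\<integral>t. H b t - H a t \<partial>lborel) = 0"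
      using H_integrable unfolding L_eq by simp
    then have "AE t in lborel. H b t - H a t = 0"
      using H_integrable H_le by (subst (asm) integral_nonneg_eq_0_iff_AE) auto
    then have "AE t in lborel. \<gamma> t = 0"
      using AE_lborel_singleton[of 0] by eventually_elim (use H_less in force)
    then have "(\<integral>t. \<gamma> t \<partial>lborel) = 0"
      by (rule integral_eq_zero_AE)
    with nonzero show False ..
  qed
  ultimately show "gauss_laplace \<gamma> a < gauss_laplace \<gamma> b"
    by simp
qed

theorem lemma1:
  fixes \<gamma>0 :: "real \<Rightarrow> real" and c :: real
  assumes nonneg: "\<And>x. \<gamma>0 x \<ge> 0"
    and integrable: "integrable lborel \<gamma>0"
    and total: "(\<integral>x. \<gamma>0 x \<partial>lborel) = 1"
    and symmetric: "\<And>x. \<gamma>0 (- x) = \<gamma>0 x"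
    and unimodal_left: "mono_on {..0} \<gamma>0"
    and unimodal_right: "antimono_on {0..} \<gamma>0"
    and c_nonneg: "c \<ge> 0"
  shows "strict_mono_on {c<..} (\<lambda>x. g_mix \<gamma>0 x c / std_normal_density x)"
proof (rule strict_mono_onI)
  fix x y
  assume "x \<in> {c<..}" "y \<in> {c<..}" "x < y"
  have "strict_mono_on {0..} (gauss_laplace \<gamma>0)"
    using nonneg integrable symmetric total by (intro gauss_laplace_strict_mono) auto
  then have "gauss_laplace \<gamma>0 (x - c) < gauss_laplace \<gamma>0 (y - c)"
    using \<open>x \<in> {c<..}\<close> \<open>x < y\<close> by (auto elim!: strict_mono_onD)
  moreover have "exp (x * c - c\<^sup>2 / 2) \<le> exp (y * c - c\<^sup>2 / 2)"
    using \<open>x < y\<close> c_nonneg by (simp add: mult_right_mono)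
  ultimately show "g_mix \<gamma>0 x c / std_normal_density x < g_mix \<gamma>0 y c / std_normal_density y"
    unfolding g_mix_div_std_normal_density
    using gauss_laplace_nonneg[OF nonneg] by (intro mult_le_less_imp_less) auto
qed

end
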